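(* Let $U\subset\mathcal Y$ be open and let $w:U\to\mathbb R$ be continuous and locally bounded. Assume: (H1) $\mathcal Y$ is reflexive; (H2) there exists $M:\mathcal Y\times\mathcal Y\to[0,\infty]$ such that $y_1\mapsto M(y_1,y_2)$ is Fréchet differentiable at every $y_1\neq y_2$ and $y_2\mapsto M(y_1,y_2)$ is Fréchet differentiable at every $y_2\ne y_1$, and there are constants $\lambda\in(0,1]$, $\Lambda\in[1,\infty)$ with $\lambda\|y_1-y_2\|\le M(y_1,y_2)\le\Lambda\|y_1-y_2\|$ for all $y_1,y_2\in\mathcal Y$, and $\lambda\le\|\nabla M(\cdot,y_2)(y_1)\|_{\mathcal Y^*}$ and $\|\nabla M(y_1,\cdot)(y_2)\|_{\mathcal Y^*}\le\Lambda$ whenever these derivatives are defined; (i) for every $x\in X$, every $u\in U$ and every unit $d\in\mathcal Y$ the directional derivative $D_df_x(u)$ exists, and there is a constant $C_0>0$ such that $\inf_{x\in S(u)}D_df_x(u)>-C_0$ for all $u\in U$ and all unit $d$; (ii) for every unit $d\in\mathcal Y$, $w$ is a viscosity subsolution in $U$ of $-\langle\nabla w(u),d\rangle+\inf_{x\in S(u)}D_df_x(u)=0$. Then $w$ is locally Lipschitz in $U$.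
   Context: Let $\mathfrak X,\mathcal Y$ be real Banach spaces, $X\subset\mathfrak X$ and $U\subset\mathcal Y$ nonempty, $f:X\times U\to\mathbb R$ continuous, and $\Phi:U\to2^X$ a set-valued map. The optimal value function is $v(u)=\inf_{x\in\Phi(u)}f(x,u)$ and the optimal set map is $S(u)=\{x\in\Phi(u):f(x,u)=v(u)\}$. For $x\in X$, $f_x(u):=f(x,u)$, and $D_df_x(u)=\lim_{s\downarrow0}\frac{f(x,u+sd)-f(x,u)}{s}$ is the directional derivative. A unit vector is one of norm $1$; the infimum over the empty set is $+\infty$. For $w:U\to\mathbb R$ ($U$ open) and $u_0\in U$: $\mathcal J^+w(u_0)=\{p\in\mathcal Y^*:\limsup_{u\to u_0}\frac{w(u)-w(u_0)-\langle p,u-u_0\rangle}{\|u-u_0\|}\le0\}$ and $\mathcal J^-w(u_0)=\{p\in\mathcal Y^*:\liminf_{u\to u_0}\frac{w(u)-w(u_0)-\langle p,u-u_0\rangle}{\|u-u_0\|}\ge0\}$. For a fixed unit $d$, an upper semicontinuous $w$ is a viscosity subsolution of $-\langle\nabla w(u),d\rangle+\inf_{x\in S(u)}D_df_x(u)=0$ at $u_0$ if $-\langle\eta,d\rangle+\inf_{x\in S(u_0)}D_df_x(u_0)\le0$ for every $\eta\in\mathcal J^+w(u_0)$; a lower semicontinuous $w$ is a viscosity supersolution at $u_0$ if $-\langle\eta,d\rangle+\inf_{x\in S(u_0)}D_df_x(u_0)\ge0$ for every $\eta\in\mathcal J^-w(u_0)$; a viscosity solution is both; "in a set" means at every point of it.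 *)

theory Defs
  imports "HOL-Analysis.Analysis"
begin

text \<open>Optimal value function v(u) = inf over Phi(u) of f(x,u); inf of empty set is +infinity.\<close>
definition optval :: "('x \<Rightarrow> 'y \<Rightarrow> real) \<Rightarrow> ('y \<Rightarrow> 'x set) \<Rightarrow> 'y \<Rightarrow> ereal" where
  "optval f Phi u = (INF x\<in>Phi u. ereal (f x u))"

definition optset :: "('x \<Rightarrow> 'y \<Rightarrow> real) \<Rightarrow> ('y \<Rightarrow> 'x set) \<Rightarrow> 'y \<Rightarrow> 'x set" where
  "optset f Phi u = {x \<in> Phi u. ereal (f x u) = optval f Phi u}"

definition dir_deriv_exists :: "('x \<Rightarrow> 'y::real_normed_vector \<Rightarrow> real) \<Rightarrow> 'x \<Rightarrow> 'y \<Rightarrow> 'y \<Rightarrow> bool" where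
  "dir_deriv_exists f x u d \<longleftrightarrow>
     (\<exists>L. ((\<lambda>s. (f x (u + s *\<^sub>R d) - f x u) / s) \<longlongrightarrow> L) (at_right 0))"

definition dir_deriv :: "('x \<Rightarrow> 'y::real_normed_vector \<Rightarrow> real) \<Rightarrow> 'x \<Rightarrow> 'y \<Rightarrow> 'y \<Rightarrow> real" where
  "dir_deriv f x u d = Lim (at_right 0) (\<lambda>s. (f x (u + s *\<^sub>R d) - f x u) / s)"

definition reflexive_space :: "'y::real_normed_vector itself \<Rightarrow> bool" where
  "reflexive_space TYPE('y) \<longleftrightarrow>
     (\<forall>\<phi> :: ('y \<Rightarrow>\<^sub>L real) \<Rightarrow>\<^sub>L real. \<exists>y::'y. \<forall>p. blinfun_apply \<phi> p = blinfun_apply p y)"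

definition superjet :: "('y::real_normed_vector \<Rightarrow> real) \<Rightarrow> 'y \<Rightarrow> ('y \<Rightarrow>\<^sub>L real) set" where
  "superjet w u0 = {p. Limsup (at u0)
      (\<lambda>u. ereal ((w u - w u0 - blinfun_apply p (u - u0)) / norm (u - u0))) \<le> 0}"

definition subjet :: "('y::real_normed_vector \<Rightarrow> real) \<Rightarrow> 'y \<Rightarrow> ('y \<Rightarrow>\<^sub>L real) set" where
  "subjet w u0 = {p. Liminf (at u0)
      (\<lambda>u. ereal ((w u - w u0 - blinfun_apply p (u - u0)) / norm (u - u0))) \<ge> 0}"

definition visc_subsol_at ::
  "('x \<Rightarrow> 'y::real_normed_vector \<Rightarrow> real) \<Rightarrow> ('y \<Rightarrow> 'x set) \<Rightarrow> 'y \<Rightarrow> ('y \<Rightarrow> real) \<Rightarrow> 'y \<Rightarrow> bool" where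
  "visc_subsol_at f Phi d w u0 \<longleftrightarrow>
     (\<forall>\<epsilon>>0. \<forall>\<^sub>F u in at u0. w u < w u0 + \<epsilon>) \<and>
     (\<forall>\<eta>\<in>superjet w u0.
        ereal (- blinfun_apply \<eta> d) + (INF x\<in>optset f Phi u0. ereal (dir_deriv f x u0 d)) \<le> 0)"

definition locally_bounded_on :: "'y::metric_space set \<Rightarrow> ('y \<Rightarrow> real) \<Rightarrow> bool" where
  "locally_bounded_on U w \<longleftrightarrow>
     (\<forall>u\<in>U. \<exists>r>0. \<exists>B. \<forall>y\<in>U \<inter> ball u r. \<bar>w y\<bar> \<le> B)"

definition locally_lipschitz_on :: "'y::metric_space set \<Rightarrow> ('y \<Rightarrow> real) \<Rightarrow> bool" where
  "locally_lipschitz_on U w \<longleftrightarrow>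
     (\<forall>u\<in>U. \<exists>r>0. \<exists>L. \<forall>y\<in>U \<inter> ball u r. \<forall>z\<in>U \<inter> ball u r. \<bar>w y - w z\<bar> \<le> L * dist y z)"

end

theory Submission
  imports Defs
begin

text \<open>Fix \<open>u\<^sub>0 \<in> U\<close> and a ball of radius \<open>R\<close> around \<open>z\<close>, inside a neighbourhood of \<open>u\<^sub>0\<close> on which
  \<open>|w| \<le> W\<close>. If \<open>w a - w z > A \<Lambda> \<parallel>a - z\<parallel>\<close> for a large \<open>A\<close>, then \<open>F = -w + A M(\<cdot>, z)\<close> satisfies
  \<open>F a < F z\<close>, and the Borwein--Preiss smooth variational principle with gauge \<open>M\<close> produces a point
  \<open>y \<noteq> z\<close> inside the ball at which \<open>F + \<Sum>\<^sub>k 2\<^sup>-\<^sup>k M(x\<^sub>k, \<cdot>)\<^sup>2\<close> is minimal. So the derivative of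
  \<open>A M(\<cdot>, z) + \<Sum>\<^sub>k 2\<^sup>-\<^sup>k M(x\<^sub>k, \<cdot>)\<^sup>2\<close> at \<open>y\<close> is a supergradient of \<open>w\<close> of norm at least
  \<open>A \<lambda> - 8 \<Lambda>\<^sup>2 R\<close>. On the other hand, testing the subsolution inequality with the directions \<open>\<pm>d\<close>
  and using (i) bounds every supergradient of \<open>w\<close> by \<open>C\<^sub>0\<close>, which is a contradiction for large \<open>A\<close>.\<close>

section \<open>Superjets\<close>

lemma norm_blinfun_le_of_unit_lower_bound:
  fixes \<eta> :: "'a::real_normed_vector \<Rightarrow>\<^sub>L real"
  assumes "0 \<le> C" and lower: "\<And>d. norm d = 1 \<Longrightarrow> - C \<le> \<eta> d"
  shows "norm \<eta> \<le> C"
proof (rule norm_blinfun_bound[OF \<open>0 \<le> C\<close>])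
  fix v :: 'a
  show "norm (\<eta> v) \<le> C * norm v"
  proof (cases "v = 0")
    case False
    define d where "d = v /\<^sub>R norm v"
    have d: "norm d = 1" "norm (- d) = 1" using False by (simp_all add: d_def)
    have "\<bar>\<eta> d\<bar> \<le> C"
      using lower[OF d(1)] lower[OF d(2)] by (simp add: blinfun.minus_right)
    moreover have "\<eta> v = norm v * \<eta> d"
      using False by (simp add: d_def blinfun.scaleR_right)
    ultimately show ?thesis
      using mult_right_mono[of "\<bar>\<eta> d\<bar>" C "norm v"] by (simp add: abs_mult mult.commute)
  qed simp
qed

lemma superjet_norm_le:
  assumes subsol: "\<And>d. norm d = 1 \<Longrightarrow> visc_subsol_at f Phi d w u"
    and lower: "\<And>d. norm d = 1 \<Longrightarrow> ereal (- C) < (INF x\<in>optset f Phi u. ereal (dir_deriv f x u d))"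
    and "0 \<le> C" and \<eta>: "\<eta> \<in> superjet w u"
  shows "norm \<eta> \<le> C"
proof (rule norm_blinfun_le_of_unit_lower_bound[OF \<open>0 \<le> C\<close>])
  fix d :: 'a assume d: "norm d = 1"
  define I where "I = (INF x\<in>optset f Phi u. ereal (dir_deriv f x u d))"
  have "ereal (- blinfun_apply \<eta> d) + I \<le> 0"
    using subsol[OF d] \<eta> unfolding visc_subsol_at_def I_def by blast
  moreover have "ereal (- C) < I" using lower[OF d] unfolding I_def .
  ultimately show "- C \<le> \<eta> d" by (cases I) auto
qed

lemma superjet_of_touching_from_above:
  fixes w \<phi> :: "'a::real_normed_vector \<Rightarrow> real"
  assumes \<phi>: "(\<phi> has_derivative blinfun_apply \<eta>) (at y)"
    and touch: "\<forall>\<^sub>F u in at y. w u - w y \<le> \<phi> u - \<phi> y"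
  shows "\<eta> \<in> superjet w y"
  unfolding superjet_def mem_Collect_eq Limsup_le_iff
proof (intro allI impI)
  fix c :: ereal assume "0 < c"
  show "\<forall>\<^sub>F u in at y. ereal ((w u - w y - \<eta> (u - y)) / norm (u - y)) < c"
  proof (cases c)
    case (real r)
    with \<open>0 < c\<close> have "r / 2 > 0" by simp
    with \<phi> have "\<forall>\<^sub>F u in at y. norm (\<phi> u - \<phi> y - \<eta> (u - y)) \<le> r / 2 * norm (u - y)"
      unfolding has_derivative_within_alt2 by blast
    moreover have "\<forall>\<^sub>F u in at y. u \<noteq> y" by (simp add: eventually_at_filter)
    ultimately show ?thesis using touch
    proof eventually_elim
      case (elim u)
      then have "w u - w y - \<eta> (u - y) \<le> r / 2 * norm (u - y)"
        using abs_le_D1[OF elim(1)[unfolded real_norm_def]] by linarith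
      moreover have "0 < norm (u - y)" using elim(2) by simp
      moreover have "r / 2 * norm (u - y) < r * norm (u - y)"
        using calculation(2) \<open>r / 2 > 0\<close> by simp
      ultimately have "(w u - w y - \<eta> (u - y)) / norm (u - y) < r"
        by (simp only: pos_divide_less_eq)
      then show ?case using real by simp
    qed
  qed (use \<open>0 < c\<close> in auto)
qed

section \<open>Derivatives of series of squared gauges\<close>

lemma has_derivative_zero_of_quadratic_bound:
  fixes f :: "'a::real_normed_vector \<Rightarrow> real"
  assumes "f y = 0" and bound: "\<And>u. \<bar>f u\<bar> \<le> C * (norm (u - y))\<^sup>2"
  shows "(f has_derivative (\<lambda>_. 0)) (at y)"
  unfolding has_derivative_at_alt
proof (intro conjI allI impI)
  fix e :: real assume "0 < e"
  show "\<exists>d>0. \<forall>u. norm (u - y) < d \<longrightarrow> norm (f u - f y - 0) \<le> e * norm (u - y)"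
  proof (intro exI conjI allI impI)
    show "e / (\<bar>C\<bar> + 1) > 0" using \<open>0 < e\<close> by simp
    fix u assume u: "norm (u - y) < e / (\<bar>C\<bar> + 1)"
    then have "(\<bar>C\<bar> + 1) * norm (u - y) \<le> e" by (simp add: field_simps)
    then have "C * norm (u - y) \<le> e"
      by (smt (verit, best) mult_right_mono norm_ge_zero)
    then have "C * (norm (u - y))\<^sup>2 \<le> e * norm (u - y)"
      by (simp add: power2_eq_square mult_right_mono flip: mult.assoc)
    then show "norm (f u - f y - 0) \<le> e * norm (u - y)"
      using bound[of u] \<open>f y = 0\<close> by simp
  qed
qed simp

lemma has_derivative_suminf_at:
  fixes h :: "nat \<Rightarrow> 'a::real_normed_vector \<Rightarrow> real" and D :: "nat \<Rightarrow> 'a \<Rightarrow>\<^sub>L real"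
  assumes deriv: "\<And>k. (h k has_derivative blinfun_apply (D k)) (at y)"
    and summable_y: "summable (\<lambda>k. h k y)"
    and summable_D: "summable (\<lambda>k. norm (D k))"
    and remainder: "\<forall>\<^sub>F u in at y. \<forall>k. \<bar>h k u - h k y - D k (u - y)\<bar> \<le> b k * norm (u - y)"
    and summable_b: "summable b"
  shows "((\<lambda>u. \<Sum>k. h k u) has_derivative blinfun_apply (\<Sum>k. D k)) (at y)"
  unfolding has_derivative_within_alt2
proof (intro conjI allI impI)
  fix e :: real assume "0 < e"
  define r where "r k u = h k u - h k y - D k (u - y)" for k u
  obtain N where N: "norm (\<Sum>k. b (k + N)) < e / 2"
    using suminf_exist_split[OF _ summable_b, of "e / 2"] \<open>0 < e\<close> by auto
  have "((\<lambda>u. \<Sum>k<N. h k u) has_derivative (\<lambda>v. \<Sum>k<N. D k v)) (at y)"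
    by (intro has_derivative_sum deriv)
  then have head: "\<forall>\<^sub>F u in at y. \<bar>\<Sum>k<N. r k u\<bar> \<le> e / 2 * norm (u - y)"
    using \<open>0 < e\<close>
    by (auto simp: has_derivative_within_alt2 r_def sum_subtractf elim!: allE[where x="e / 2"])
  from head remainder
  show "\<forall>\<^sub>F u in at y. norm ((\<Sum>k. h k u) - (\<Sum>k. h k y) - (\<Sum>k. D k) (u - y)) \<le> e * norm (u - y)"
  proof eventually_elim
    case (elim u)
    have r_le: "norm (r k u) \<le> b k * norm (u - y)" for k using elim(2) by (simp add: r_def)
    have summable_r: "summable (\<lambda>k. r k u)"
      using summable_comparison_test'[OF summable_mult2[OF summable_b] r_le] .
    have summable_bN: "summable (\<lambda>k. b (k + N))"
      using summable_b by (rule summable_ignore_initial_segment)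
    have "\<bar>\<Sum>k. r (k + N) u\<bar> \<le> (\<Sum>k. b (k + N) * norm (u - y))"
      using norm_suminf_le[of "\<lambda>k. r (k + N) u"] r_le summable_mult2[OF summable_bN] by simp
    also have "\<dots> = (\<Sum>k. b (k + N)) * norm (u - y)"
      by (rule suminf_mult2[OF summable_bN, symmetric])
    also have "\<dots> \<le> e / 2 * norm (u - y)"
      using N by (intro mult_right_mono) auto
    finally have tail: "\<bar>\<Sum>k. r (k + N) u\<bar> \<le> e / 2 * norm (u - y)" .
    have summable_D': "summable D" using summable_D by (rule summable_norm_cancel)
    have sum_D: "(\<Sum>k. D k) (u - y) = (\<Sum>k. D k (u - y))"
      using bounded_linear.suminf[OF blinfun.bounded_linear_left summable_D'] by simp
    have summable_Du: "summable (\<lambda>k. D k (u - y))"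
      using bounded_linear.summable[OF blinfun.bounded_linear_left summable_D'] by simp
    have "(\<lambda>k. h k u) = (\<lambda>k. r k u + h k y + D k (u - y))" by (simp add: r_def)
    then have "(\<Sum>k. h k u) - (\<Sum>k. h k y) - (\<Sum>k. D k) (u - y) = (\<Sum>k. r k u)"
      using suminf_add[OF summable_add[OF summable_r summable_y] summable_Du]
        suminf_add[OF summable_r summable_y] by (simp add: sum_D)
    also have "\<dots> = (\<Sum>k. r (k + N) u) + (\<Sum>k<N. r k u)"
      by (rule suminf_split_initial_segment[OF summable_r])
    finally show ?case using tail elim(1) by simp
  qed
qed (rule blinfun.bounded_linear_right)

text \<open>The alternative \<open>g y = 0\<close> covers the centre of a gauge, where it need not be differentiable.\<close>

lemma square_of_lipschitz_has_derivative:
  fixes g :: "'a::real_normed_vector \<Rightarrow> real"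
  assumes lip: "\<And>u v. \<bar>g u - g v\<bar> \<le> L * norm (u - v)" and "0 \<le> L"
    and diff: "g y = 0 \<or> (\<exists>Dg. (g has_derivative Dg) (at y) \<and> onorm Dg \<le> L)"
  obtains D where "((\<lambda>u. (g u)\<^sup>2) has_derivative blinfun_apply D) (at y)"
    and "norm D \<le> 2 * L * \<bar>g y\<bar>"
    and "\<And>u. \<bar>(g u)\<^sup>2 - (g y)\<^sup>2 - D (u - y)\<bar> \<le> (L * norm (u - y) + 4 * \<bar>g y\<bar>) * L * norm (u - y)"
proof -
  have sq_le: "(g u - g y)\<^sup>2 \<le> L\<^sup>2 * (norm (u - y))\<^sup>2" for u
    using power_mono[OF lip[of u y] abs_ge_zero, of 2] by (simp add: power_mult_distrib)
  consider "g y = 0" | Dg where "(g has_derivative Dg) (at y)" "onorm Dg \<le> L"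
    using diff by blast
  then show ?thesis
  proof cases
    case 1
    have "((\<lambda>u. (g u)\<^sup>2) has_derivative blinfun_apply 0) (at y)"
      by (rule has_derivative_eq_rhs[OF has_derivative_zero_of_quadratic_bound[where C="L\<^sup>2"]])
        (use 1 sq_le in auto)
    then show ?thesis
      by (rule that) (use 1 sq_le in \<open>auto simp: power2_eq_square mult_ac\<close>)
  next
    case 2
    have lin: "bounded_linear Dg" using 2(1) by (rule has_derivative_bounded_linear)
    define D where "D = (2 * g y) *\<^sub>R Blinfun Dg"
    have D_apply: "D v = 2 * g y * Dg v" for v
      using lin by (simp add: D_def scaleR_blinfun.rep_eq bounded_linear_Blinfun_apply)
    have "((\<lambda>u. (g u)\<^sup>2) has_derivative (\<lambda>v. g y * Dg v + Dg v * g y)) (at y)"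
      using has_derivative_mult[OF 2(1) 2(1)] by (simp add: power2_eq_square)
    then have deriv: "((\<lambda>u. (g u)\<^sup>2) has_derivative blinfun_apply D) (at y)"
      by (rule has_derivative_eq_rhs) (simp add: D_apply fun_eq_iff)
    have "norm D = 2 * \<bar>g y\<bar> * onorm Dg"
      unfolding D_def norm_scaleR using lin by (simp add: norm_blinfun.rep_eq bounded_linear_Blinfun_apply abs_mult)
    then have norm_D: "norm D \<le> 2 * L * \<bar>g y\<bar>"
      using mult_left_mono[OF 2(2), of "2 * \<bar>g y\<bar>"] by (simp add: mult_ac)
    have "\<bar>(g u)\<^sup>2 - (g y)\<^sup>2 - D (u - y)\<bar> \<le> (L * norm (u - y) + 4 * \<bar>g y\<bar>) * L * norm (u - y)"
      for u
    proof -
      have "\<bar>Dg (u - y)\<bar> \<le> L * norm (u - y)"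
        using onorm[OF lin, of "u - y"] mult_right_mono[OF 2(2) norm_ge_zero, of "u - y"] by simp
      then have rem: "\<bar>g u - g y - Dg (u - y)\<bar> \<le> 2 * L * norm (u - y)"
        using lip[of u y] by linarith
      have "(g u)\<^sup>2 - (g y)\<^sup>2 - D (u - y) = (g u - g y)\<^sup>2 + 2 * g y * (g u - g y - Dg (u - y))"
        by (simp add: D_apply power2_eq_square algebra_simps)
      also have "\<bar>\<dots>\<bar> \<le> (g u - g y)\<^sup>2 + 2 * \<bar>g y\<bar> * \<bar>g u - g y - Dg (u - y)\<bar>"
        using abs_triangle_ineq[of "(g u - g y)\<^sup>2" "2 * g y * (g u - g y - Dg (u - y))"]
        by (simp add: abs_mult)
      also have "\<dots> \<le> L\<^sup>2 * (norm (u - y))\<^sup>2 + 2 * \<bar>g y\<bar> * (2 * L * norm (u - y))"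
        using sq_le[of u] mult_left_mono[OF rem, of "2 * \<bar>g y\<bar>"] by linarith
      also have "\<dots> = (L * norm (u - y) + 4 * \<bar>g y\<bar>) * L * norm (u - y)"
        by (simp add: power2_eq_square algebra_simps)
      finally show ?thesis .
    qed
    with deriv norm_D show ?thesis by (rule that)
  qed
qed

lemma has_derivative_weighted_square_sum:
  fixes g :: "nat \<Rightarrow> 'a::real_normed_vector \<Rightarrow> real"
  assumes lip: "\<And>k u v. \<bar>g k u - g k v\<bar> \<le> L * norm (u - v)" and "0 \<le> L"
    and diff: "\<And>k. g k y = 0 \<or> (\<exists>Dg. (g k has_derivative Dg) (at y) \<and> onorm Dg \<le> L)"
    and bound: "\<And>k. \<bar>g k y\<bar> \<le> B"
  obtains p where "((\<lambda>u. \<Sum>k. (1/2)^k * (g k u)\<^sup>2) has_derivative blinfun_apply p) (at y)"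
    and "norm p \<le> 4 * L * B"
proof -
  have "\<exists>D. ((\<lambda>u. (g k u)\<^sup>2) has_derivative blinfun_apply D) (at y) \<and> norm D \<le> 2 * L * \<bar>g k y\<bar> \<and>
      (\<forall>u. \<bar>(g k u)\<^sup>2 - (g k y)\<^sup>2 - D (u - y)\<bar> \<le> (L * norm (u - y) + 4 * \<bar>g k y\<bar>) * L * norm (u - y))"
    for k by (rule square_of_lipschitz_has_derivative[OF lip \<open>0 \<le> L\<close> diff]) blast
  then obtain D where D: "\<And>k. ((\<lambda>u. (g k u)\<^sup>2) has_derivative blinfun_apply (D k)) (at y)"
    and norm_D: "\<And>k. norm (D k) \<le> 2 * L * \<bar>g k y\<bar>"
    and rem: "\<And>k u. \<bar>(g k u)\<^sup>2 - (g k y)\<^sup>2 - D k (u - y)\<bar>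
      \<le> (L * norm (u - y) + 4 * \<bar>g k y\<bar>) * L * norm (u - y)"
    by metis
  define c :: "nat \<Rightarrow> real" where "c k = (1/2)^k" for k
  have c: "summable c" "0 \<le> c k" "suminf c = 2" for k
    unfolding c_def using summable_geometric[of "1/2::real"] suminf_geometric[of "1/2::real"] by simp_all
  have norm_cD: "norm (c k *\<^sub>R D k) \<le> c k * (2 * L * B)" for k
    using norm_D[of k] mult_left_mono[OF bound[of k] \<open>0 \<le> L\<close>] c(2)[of k] by (simp add: mult_left_mono)
  have "((\<lambda>u. \<Sum>k. c k * (g k u)\<^sup>2) has_derivative blinfun_apply (\<Sum>k. c k *\<^sub>R D k)) (at y)"
  proof (rule has_derivative_suminf_at[where b="\<lambda>k. c k * ((L + 4 * B) * L)"])
    show "((\<lambda>u. c k * (g k u)\<^sup>2) has_derivative blinfun_apply (c k *\<^sub>R D k)) (at y)" for k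
      using has_derivative_mult_right[OF D[of k], of "c k"]
      by (rule has_derivative_eq_rhs) (simp add: fun_eq_iff scaleR_blinfun.rep_eq)
    show "summable (\<lambda>k. c k * (g k y)\<^sup>2)"
      using power_mono[OF bound abs_ge_zero, of _ 2] c(2)
      by (intro summable_comparison_test'[OF summable_mult2[OF c(1), of "B\<^sup>2"]]) (simp add: mult_left_mono)
    show "summable (\<lambda>k. norm (c k *\<^sub>R D k))"
      using norm_cD by (intro summable_comparison_test'[OF summable_mult2[OF c(1)]]) simp
    show "summable (\<lambda>k. c k * ((L + 4 * B) * L))" by (rule summable_mult2[OF c(1)])
    show "\<forall>\<^sub>F u in at y. \<forall>k. \<bar>c k * (g k u)\<^sup>2 - c k * (g k y)\<^sup>2 - (c k *\<^sub>R D k) (u - y)\<bar>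
        \<le> c k * ((L + 4 * B) * L) * norm (u - y)"
      using eventually_at_ball[OF zero_less_one, of y UNIV]
    proof (eventually_elim, intro allI)
      fix u k assume "u \<in> ball y 1 \<and> u \<in> UNIV"
      then have "L * norm (u - y) + 4 * \<bar>g k y\<bar> \<le> L + 4 * B"
        using bound[of k] \<open>0 \<le> L\<close> by (smt (verit) dist_norm mem_ball mult_left_le norm_minus_commute)
      then have "\<bar>(g k u)\<^sup>2 - (g k y)\<^sup>2 - D k (u - y)\<bar> \<le> (L + 4 * B) * L * norm (u - y)"
        using order_trans[OF rem] \<open>0 \<le> L\<close> by (simp add: mult_right_mono)
      then have "c k * \<bar>(g k u)\<^sup>2 - (g k y)\<^sup>2 - D k (u - y)\<bar> \<le> c k * ((L + 4 * B) * L * norm (u - y))"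
        using c(2)[of k] by (rule mult_left_mono)
      then show "\<bar>c k * (g k u)\<^sup>2 - c k * (g k y)\<^sup>2 - (c k *\<^sub>R D k) (u - y)\<bar>
          \<le> c k * ((L + 4 * B) * L) * norm (u - y)"
        using c(2)[of k] by (simp add: scaleR_blinfun.rep_eq abs_mult mult.assoc flip: right_diff_distrib)
    qed
  qed
  moreover have "norm (\<Sum>k. c k *\<^sub>R D k) \<le> 4 * L * B"
    using norm_suminf_le[OF norm_cD summable_mult2[OF c(1)]] suminf_mult2[OF c(1), of "2 * L * B"] c(3)
    by simp
  ultimately show ?thesis unfolding c_def by (rule that)
qed

section \<open>A smooth variational principle\<close>

locale smooth_variational =
  fixes K :: "'a::banach set" and F :: "'a \<Rightarrow> real" and m :: "'a \<Rightarrow> 'a \<Rightarrow> real"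
    and lam R :: real and a :: 'a
  assumes closed_K: "closed K" and continuous_F: "continuous_on K F" and bdd_F: "bdd_below (F ` K)"
    and continuous_m: "\<And>b. continuous_on K (m b)" and m_self: "\<And>b. m b b = 0"
    and m_lower: "\<And>b u. lam * norm (u - b) \<le> m b u" and lam_pos: "0 < lam"
    and m_bounded: "\<And>u v. u \<in> K \<Longrightarrow> v \<in> K \<Longrightarrow> m u v \<le> R"
    and a_in_K: "a \<in> K"
begin

text \<open>After \<open>n\<close> steps the state is the point \<open>x\<^sub>n\<close> together with
  the cost \<open>F + \<Sum>\<^sub>k\<^sub><\<^sub>n 2\<^sup>-\<^sup>k m(x\<^sub>k, \<cdot>)\<^sup>2\<close>; the next point is a \<open>4\<^sup>-\<^sup>n\<^sup>-\<^sup>1\<close>-approximate minimiser of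
  the next cost over the current sublevel set, which is what makes the sublevel sets shrink to a point.\<close>

primrec iterate :: "nat \<Rightarrow> 'a \<times> ('a \<Rightarrow> real)" where
  "iterate 0 = (a, F)"
| "iterate (Suc n) =
    (let (x, H) = iterate n;
         H' = (\<lambda>u. H u + (1/2)^n * (m x u)\<^sup>2);
         S = {u \<in> K. H' u \<le> H x}
     in (SOME p. p \<in> S \<and> (\<forall>u\<in>S. H' p \<le> H' u + (1/4)^Suc n), H'))"

definition center :: "nat \<Rightarrow> 'a" where
  "center n = fst (iterate n)"

definition cost :: "nat \<Rightarrow> 'a \<Rightarrow> real" where
  "cost n = snd (iterate n)"

definition sublevel :: "nat \<Rightarrow> 'a set" where
  "sublevel n = {u \<in> K. cost (Suc n) u \<le> cost n (center n)}"

lemma m_nonneg: "0 \<le> m b u"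
proof -
  have "0 \<le> lam * norm (u - b)" using lam_pos by simp
  then show ?thesis using m_lower order_trans by blast
qed

lemma center_0: "center 0 = a" and cost_0: "cost 0 = F"
  by (simp_all add: center_def cost_def)

lemma cost_Suc: "cost (Suc n) u = cost n u + (1/2)^n * (m (center n) u)\<^sup>2"
  by (simp add: center_def cost_def case_prod_beta Let_def)

lemma center_Suc:
  "center (Suc n) = (SOME p. p \<in> sublevel n \<and>
     (\<forall>u\<in>sublevel n. cost (Suc n) p \<le> cost (Suc n) u + (1/4)^Suc n))"
  by (simp add: sublevel_def center_def cost_def case_prod_beta Let_def)

lemma cost_eq: "cost n u = F u + (\<Sum>k<n. (1/2)^k * (m (center k) u)\<^sup>2)"
  by (induction n) (simp_all add: cost_0 cost_Suc)

lemma cost_mono: "n \<le> j \<Longrightarrow> cost n u \<le> cost j u"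
  unfolding cost_eq by (simp add: sum_mono2)

lemma F_le_cost: "F u \<le> cost n u"
  using cost_mono[of 0 n u] by (simp add: cost_0)

lemma center_in_sublevel: "center n \<in> K \<Longrightarrow> center n \<in> sublevel n"
  by (simp add: sublevel_def cost_Suc m_self)

lemma center_Suc_almost_minimal:
  assumes "center n \<in> K"
  shows "center (Suc n) \<in> sublevel n"
    and "\<And>u. u \<in> sublevel n \<Longrightarrow> cost (Suc n) (center (Suc n)) \<le> cost (Suc n) u + (1/4)^Suc n"
proof -
  let ?V = "cost (Suc n) ` sublevel n"
  have "?V \<noteq> {}" using center_in_sublevel[OF assms] by blast
  moreover have "bdd_below ?V"
  proof -
    obtain c where c: "\<And>u. u \<in> K \<Longrightarrow> c \<le> F u" using bdd_F by (auto simp: bdd_below_def)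
    have "c \<le> cost (Suc n) u" if "u \<in> sublevel n" for u
      using order_trans[OF c F_le_cost] that by (simp add: sublevel_def)
    then show ?thesis by (auto simp: bdd_below_def)
  qed
  ultimately obtain p where p: "p \<in> sublevel n" "cost (Suc n) p < Inf ?V + (1/4)^Suc n"
    using cInf_less_iff[of ?V "Inf ?V + (1/4)^Suc n"] by auto
  have "\<exists>p. p \<in> sublevel n \<and> (\<forall>u\<in>sublevel n. cost (Suc n) p \<le> cost (Suc n) u + (1/4)^Suc n)"
  proof (intro exI conjI ballI)
    fix u assume "u \<in> sublevel n"
    then have "Inf ?V \<le> cost (Suc n) u" by (intro cInf_lower \<open>bdd_below ?V\<close>) simp
    with p(2) show "cost (Suc n) p \<le> cost (Suc n) u + (1/4)^Suc n" by linarith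
  qed (rule p(1))
  from someI_ex[OF this] show "center (Suc n) \<in> sublevel n"
    and "\<And>u. u \<in> sublevel n \<Longrightarrow> cost (Suc n) (center (Suc n)) \<le> cost (Suc n) u + (1/4)^Suc n"
    unfolding center_Suc[symmetric] by auto
qed

lemma center_in_K: "center n \<in> K"
proof (induction n)
  case (Suc n)
  then show ?case using center_Suc_almost_minimal(1)[OF Suc] by (simp add: sublevel_def)
qed (simp add: center_0 a_in_K)

lemma cost_center_Suc_le: "cost (Suc n) (center (Suc n)) \<le> cost n (center n)"
  using center_Suc_almost_minimal(1)[OF center_in_K] by (simp add: sublevel_def)

lemma cost_center_antimono: "n \<le> j \<Longrightarrow> cost j (center j) \<le> cost n (center n)"
  by (induction j rule: dec_induct) (use cost_center_Suc_le order_trans in blast)+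

lemma sublevel_antimono: "n \<le> j \<Longrightarrow> sublevel j \<subseteq> sublevel n"
proof (induction j rule: dec_induct)
  case (step j)
  have "sublevel (Suc j) \<subseteq> sublevel j"
  proof
    fix u assume u: "u \<in> sublevel (Suc j)"
    have "cost (Suc j) u \<le> cost (Suc (Suc j)) u" by (rule cost_mono) simp
    also have "\<dots> \<le> cost j (center j)" using u cost_center_Suc_le by (simp add: sublevel_def) (meson order_trans)
    finally show "u \<in> sublevel j" using u by (simp add: sublevel_def)
  qed
  with step show ?case by blast
qed simp

lemma closed_sublevel: "closed (sublevel n)"
proof -
  have "continuous_on K (cost (Suc n))"
    unfolding cost_eq by (intro continuous_intros continuous_F continuous_m)
  then show ?thesis
    unfolding sublevel_def by (intro continuous_on_closed_Collect_le continuous_on_const closed_K)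
qed

lemma sublevel_nonempty: "sublevel n \<noteq> {}"
  using center_in_sublevel[OF center_in_K] by blast

lemma norm_diff_center_sublevel:
  assumes "u \<in> sublevel (Suc n)"
  shows "lam\<^sup>2 * (norm (u - center (Suc n)))\<^sup>2 \<le> (1/2)^Suc n"
proof -
  let ?c = "(1/2::real)^Suc n"
  have "sublevel (Suc n) \<subseteq> sublevel n" by (rule sublevel_antimono) simp
  with assms have "u \<in> sublevel n" by blast
  have "cost (Suc n) u + ?c * (m (center (Suc n)) u)\<^sup>2 \<le> cost (Suc n) (center (Suc n))"
    using assms unfolding sublevel_def cost_Suc[of "Suc n"] by blast
  also have "\<dots> \<le> cost (Suc n) u + ?c * ?c"
    using center_Suc_almost_minimal(2)[OF center_in_K \<open>u \<in> sublevel n\<close>]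
    by (simp add: power_mult_distrib[symmetric])
  finally have "(m (center (Suc n)) u)\<^sup>2 \<le> ?c" by simp
  moreover have "(lam * norm (u - center (Suc n)))\<^sup>2 \<le> (m (center (Suc n)) u)\<^sup>2"
    using m_lower[of u "center (Suc n)"] lam_pos by (intro power_mono) simp_all
  ultimately show ?thesis by (simp add: power_mult_distrib)
qed

lemma sublevel_shrinks:
  assumes "0 < e"
  shows "\<exists>n. \<forall>u\<in>sublevel n. \<forall>v\<in>sublevel n. dist u v < e"
proof -
  have "0 < (lam * e / 2)\<^sup>2" using lam_pos assms by simp
  then obtain N where N: "(1/2::real)^N < (lam * e / 2)\<^sup>2"
    using real_arch_pow_inv[of "(lam * e / 2)\<^sup>2" "1/2"] by auto
  have close: "norm (u - center (Suc N)) < e / 2" if "u \<in> sublevel (Suc N)" for u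
  proof -
    have "(1/2::real)^Suc N \<le> (1/2)^N" by (intro power_decreasing) auto
    with norm_diff_center_sublevel[OF that] N
    have "lam\<^sup>2 * (norm (u - center (Suc N)))\<^sup>2 < (lam * e / 2)\<^sup>2" by linarith
    then have "(lam * norm (u - center (Suc N)))\<^sup>2 < (lam * (e / 2))\<^sup>2"
      by (simp add: power_mult_distrib)
    then have "lam * norm (u - center (Suc N)) < lam * (e / 2)"
      by (rule power_less_imp_less_base) (use lam_pos assms in simp)
    then show ?thesis using lam_pos by simp
  qed
  have "dist u v < e" if "u \<in> sublevel (Suc N)" "v \<in> sublevel (Suc N)" for u v
    using close[OF that(1)] close[OF that(2)] norm_triangle_lt[of "u - center (Suc N)" "center (Suc N) - v" e]
    by (simp add: dist_norm norm_minus_commute)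
  then show ?thesis by blast
qed

definition penalty :: "'a \<Rightarrow> real" where
  "penalty u = (\<Sum>k. (1/2)^k * (m (center k) u)\<^sup>2)"

lemma summable_penalty: "u \<in> K \<Longrightarrow> summable (\<lambda>k. (1/2)^k * (m (center k) u)\<^sup>2)"
  using m_bounded[OF center_in_K] m_nonneg
  by (intro summable_comparison_test'[OF summable_mult2[OF summable_geometric[of "1/2::real"]],
        of _ _ "R\<^sup>2"]) (auto intro!: mult_left_mono power_mono)

lemma penalty_nonneg: "u \<in> K \<Longrightarrow> 0 \<le> penalty u"
  unfolding penalty_def by (intro suminf_nonneg summable_penalty mult_nonneg_nonneg) auto

lemma cost_le_penalty: "u \<in> K \<Longrightarrow> cost n u \<le> F u + penalty u"
  unfolding cost_eq penalty_def
  by (intro add_left_mono sum_le_suminf summable_penalty mult_nonneg_nonneg) auto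

lemma penalty_le_cost_center:
  assumes "\<And>j. y \<in> sublevel j"
  shows "F y + penalty y \<le> cost n (center n)"
proof -
  have "(\<Sum>k<j. (1/2)^k * (m (center k) y)\<^sup>2) \<le> cost n (center n) - F y" for j
  proof -
    let ?i = "max j n"
    have "cost j y \<le> cost (Suc ?i) y" by (rule cost_mono) simp
    also have "\<dots> \<le> cost ?i (center ?i)" using assms[of ?i] by (simp add: sublevel_def)
    also have "\<dots> \<le> cost n (center n)" by (rule cost_center_antimono) simp
    finally show ?thesis by (simp add: cost_eq)
  qed
  moreover have "y \<in> K" using assms[of 0] by (simp add: sublevel_def)
  ultimately show ?thesis
    unfolding penalty_def using suminf_le_const[OF summable_penalty] by fastforce
qed

theorem smooth_variational_principle:
  obtains y where "y \<in> K" and "F y \<le> F a" and "\<And>u. u \<in> K \<Longrightarrow> F y + penalty y \<le> F u + penalty u"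
proof -
  obtain y where y: "\<Inter>(range sublevel) = {y}"
    using decreasing_closed_nest_sing[OF closed_sublevel sublevel_nonempty sublevel_antimono sublevel_shrinks]
    by blast
  then have y_sublevel: "\<And>n. y \<in> sublevel n" by blast
  then have "y \<in> K" by (simp add: sublevel_def)
  show ?thesis
  proof (rule that[OF \<open>y \<in> K\<close>])
    show "F y \<le> F a"
      using penalty_le_cost_center[OF y_sublevel, of 0] penalty_nonneg[OF \<open>y \<in> K\<close>]
      by (simp add: cost_0 center_0)
  next
    fix u assume "u \<in> K"
    show "F y + penalty y \<le> F u + penalty u"
    proof (cases "\<forall>n. u \<in> sublevel n")
      case True
      then show ?thesis using y by auto
    next
      case False
      then obtain n where "u \<notin> sublevel n" by blast
      then have "cost n (center n) < cost (Suc n) u" using \<open>u \<in> K\<close> by (simp add: sublevel_def)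
      then show ?thesis
        using penalty_le_cost_center[OF y_sublevel, of n] cost_le_penalty[OF \<open>u \<in> K\<close>, of "Suc n"]
        by linarith
    qed
  qed
qed

end

section \<open>Gauges and local Lipschitz continuity\<close>

locale gauge =
  fixes M :: "'a::real_normed_vector \<Rightarrow> 'a \<Rightarrow> real" and lam Lam :: real
  assumes lam_pos: "0 < lam" and Lam_nonneg: "0 \<le> Lam"
    and lower: "\<And>a b. lam * norm (a - b) \<le> M a b"
    and upper: "\<And>a b. M a b \<le> Lam * norm (a - b)"
    and differentiable_fst: "\<And>a b. a \<noteq> b \<Longrightarrow> (\<lambda>u. M u b) differentiable (at a)"
    and differentiable_snd: "\<And>a b. b \<noteq> a \<Longrightarrow> M a differentiable (at b)"
    and derivative_fst_ge: "\<And>a b D. ((\<lambda>u. M u b) has_derivative D) (at a) \<Longrightarrow> lam \<le> onorm D"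
    and derivative_snd_le: "\<And>a b D. (M a has_derivative D) (at b) \<Longrightarrow> onorm D \<le> Lam"
begin

lemma M_self: "M a a = 0"
  using lower[of a a] upper[of a a] by simp

lemma M_nonneg: "0 \<le> M a b"
  using lam_pos order_trans[OF _ lower] by simp

lemma lipschitz_snd: "\<bar>M a u - M a v\<bar> \<le> Lam * norm (u - v)"
proof (cases "a \<in> closed_segment u v")
  case True
  have "M a u \<le> Lam * norm (u - v)"
    using order_trans[OF upper mult_left_mono[OF segment_bound(1)[OF True] Lam_nonneg]]
    by (simp add: norm_minus_commute)
  moreover have "M a v \<le> Lam * norm (u - v)"
    using order_trans[OF upper mult_left_mono[OF segment_bound(2)[OF True] Lam_nonneg]]
    by (simp add: norm_minus_commute)
  ultimately show ?thesis using M_nonneg[of a u] M_nonneg[of a v] by linarith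
next
  case False
  have "\<exists>D. (M a has_derivative D) (at b)" if "b \<in> closed_segment u v" for b
    using differentiable_snd[of b a] that False unfolding differentiable_def by blast
  then obtain D where D: "\<And>b. b \<in> closed_segment u v \<Longrightarrow> (M a has_derivative D b) (at b)"
    by metis
  have "norm (M a u - M a v) \<le> Lam * norm (u - v)"
    by (rule differentiable_bound[where S="closed_segment u v" and f'=D])
      (use D derivative_snd_le in \<open>auto intro: has_derivative_at_withinI\<close>)
  then show ?thesis by simp
qed

lemma continuous_on_snd: "continuous_on S (M a)"
  by (rule lipschitz_on_continuous_on[where L=Lam], rule lipschitz_onI)
    (use lipschitz_snd Lam_nonneg in \<open>auto simp: dist_norm\<close>)

lemma isCont_fst: "isCont (\<lambda>u. M u b) a"
proof (cases "a = b")
  case True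
  have "((\<lambda>u. M u b) \<longlongrightarrow> 0) (at b)"
  proof (rule tendsto_sandwich[of "\<lambda>_. 0" _ _ "\<lambda>u. Lam * norm (u - b)"])
    have "((\<lambda>u. Lam * norm (u - b)) \<longlongrightarrow> Lam * norm (b - b)) (at b)" by (intro tendsto_intros)
    then show "((\<lambda>u. Lam * norm (u - b)) \<longlongrightarrow> 0) (at b)" by simp
  qed (simp_all add: M_nonneg upper)
  then show ?thesis using True by (simp add: isCont_def M_self)
next
  case False
  then show ?thesis by (intro differentiable_imp_continuous_within differentiable_fst)
qed

end

lemma (in gauge) superjet_at_perturbed_minimum:
  fixes w :: "'a \<Rightarrow> real" and x :: "nat \<Rightarrow> 'a"
  assumes "y \<noteq> z" and "0 \<le> A" and "y \<in> interior K"
    and bound: "\<And>k. M (x k) y \<le> B"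
    and minimal: "\<And>u. u \<in> K \<Longrightarrow>
      - w y + A * M y z + (\<Sum>k. (1/2)^k * (M (x k) y)\<^sup>2) \<le> - w u + A * M u z + (\<Sum>k. (1/2)^k * (M (x k) u)\<^sup>2)"
  obtains \<eta> where "\<eta> \<in> superjet w y" and "A * lam - 4 * Lam * B \<le> norm \<eta>"
proof -
  obtain D where D: "((\<lambda>u. M u z) has_derivative D) (at y)"
    using differentiable_fst[OF \<open>y \<noteq> z\<close>] unfolding differentiable_def by blast
  have lin: "bounded_linear D" using D by (rule has_derivative_bounded_linear)
  have diff: "M (x k) y = 0 \<or> (\<exists>D. (M (x k) has_derivative D) (at y) \<and> onorm D \<le> Lam)" for k
    using differentiable_snd[of y "x k"] derivative_snd_le M_self unfolding differentiable_def by blast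
  have bound_abs: "\<bar>M (x k) y\<bar> \<le> B" for k using bound[of k] M_nonneg[of "x k" y] by simp
  obtain p where p: "((\<lambda>u. \<Sum>k. (1/2)^k * (M (x k) u)\<^sup>2) has_derivative blinfun_apply p) (at y)"
    and norm_p: "norm p \<le> 4 * Lam * B"
    by (rule has_derivative_weighted_square_sum[where g="\<lambda>k. M (x k)", OF lipschitz_snd Lam_nonneg diff bound_abs])
  define \<eta> where "\<eta> = A *\<^sub>R Blinfun D + p"
  obtain e where "0 < e" "ball y e \<subseteq> K"
    using \<open>y \<in> interior K\<close> by (meson mem_interior)
  then have "\<forall>\<^sub>F u in at y. u \<in> K"
    using eventually_at_ball[OF \<open>0 < e\<close>, of y UNIV] by (auto elim!: eventually_mono)
  then have touch: "\<forall>\<^sub>F u in at y. w u - w y \<le>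
      (A * M u z + (\<Sum>k. (1/2)^k * (M (x k) u)\<^sup>2)) - (A * M y z + (\<Sum>k. (1/2)^k * (M (x k) y)\<^sup>2))"
  proof eventually_elim
    case (elim u)
    from minimal[OF elim] show ?case by linarith
  qed
  show ?thesis
  proof (rule that)
    have "((\<lambda>u. A * M u z + (\<Sum>k. (1/2)^k * (M (x k) u)\<^sup>2)) has_derivative (\<lambda>v. A * D v + p v)) (at y)"
      by (intro derivative_intros D p)
    then have "((\<lambda>u. A * M u z + (\<Sum>k. (1/2)^k * (M (x k) u)\<^sup>2)) has_derivative blinfun_apply \<eta>) (at y)"
      by (rule has_derivative_eq_rhs) (use lin in \<open>simp add: \<eta>_def fun_eq_iff blinfun.add_left
          scaleR_blinfun.rep_eq bounded_linear_Blinfun_apply\<close>)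
    then show "\<eta> \<in> superjet w y" using touch by (rule superjet_of_touching_from_above)
    have "A * lam \<le> norm (A *\<^sub>R Blinfun D)"
      unfolding norm_scaleR using mult_left_mono[OF derivative_fst_ge[OF D] \<open>0 \<le> A\<close>] lin \<open>0 \<le> A\<close>
      by (simp add: norm_blinfun.rep_eq bounded_linear_Blinfun_apply)
    also have "\<dots> \<le> norm \<eta> + norm p"
      unfolding \<eta>_def using norm_triangle_ineq4[of "A *\<^sub>R Blinfun D + p" p] by simp
    finally show "A * lam - 4 * Lam * B \<le> norm \<eta>" using norm_p by linarith
  qed
qed

lemma smooth_variational_gauge_cball:
  fixes M :: "'a::banach \<Rightarrow> 'a \<Rightarrow> real" and w :: "'a \<Rightarrow> real"
  assumes "gauge M lam Lam"
    and cont: "continuous_on (cball z R) w"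
    and bounded: "\<And>v. v \<in> cball z R \<Longrightarrow> \<bar>w v\<bar> \<le> W"
    and "0 \<le> A" and a: "a \<in> cball z R"
  shows "smooth_variational (cball z R) (\<lambda>u. - w u + A * M u z) M lam (2 * Lam * R) a"
proof -
  interpret gauge M lam Lam by fact
  show ?thesis
  proof
    show "continuous_on (cball z R) (\<lambda>u. - w u + A * M u z)"
      by (intro continuous_intros cont continuous_at_imp_continuous_on ballI isCont_fst)
    show "bdd_below ((\<lambda>u. - w u + A * M u z) ` cball z R)"
    proof (rule bdd_belowI2)
      fix u assume "u \<in> cball z R"
      then show "- W \<le> - w u + A * M u z"
        using bounded[of u] mult_nonneg_nonneg[OF \<open>0 \<le> A\<close> M_nonneg[of u z]] by simp
    qed
    show "lam * norm (u - b) \<le> M b u" for b u using lower[of b u] by (simp add: norm_minus_commute)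
    show "M u v \<le> 2 * Lam * R" if "u \<in> cball z R" "v \<in> cball z R" for u v
    proof -
      have "norm (u - v) \<le> 2 * R" using that norm_diff_triangle_le[of u z R v R]
        by (simp add: dist_norm norm_minus_commute)
      then have "Lam * norm (u - v) \<le> Lam * (2 * R)" by (rule mult_left_mono[OF _ Lam_nonneg])
      then show ?thesis using upper[of u v] by (simp add: mult_ac)
    qed
  qed (use a lam_pos M_self continuous_on_snd in auto)
qed

lemma one_sided_lipschitz_of_superjet_bound:
  fixes M :: "'a::banach \<Rightarrow> 'a \<Rightarrow> real" and w :: "'a \<Rightarrow> real"
  assumes gauge: "gauge M lam Lam" and "0 < R"
    and cont: "continuous_on (cball z R) w"
    and bounded: "\<And>v. v \<in> cball z R \<Longrightarrow> \<bar>w v\<bar> \<le> W"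
    and superjet: "\<And>y \<eta>. y \<in> ball z R \<Longrightarrow> \<eta> \<in> superjet w y \<Longrightarrow> norm \<eta> \<le> C"
    and "0 \<le> C" and A: "C + 8 * Lam\<^sup>2 * R + 2 * W / R < A * lam"
    and a: "a \<in> cball z R"
  shows "w a - w z \<le> A * Lam * norm (a - z)"
proof (rule ccontr)
  interpret gauge M lam Lam by fact
  assume contra: "\<not> ?thesis"
  have "0 \<le> W" using bounded[of z] \<open>0 < R\<close> by simp
  then have "0 \<le> 2 * W / R" using \<open>0 < R\<close> by simp
  moreover have "0 \<le> 8 * Lam\<^sup>2 * R" using \<open>0 < R\<close> by simp
  ultimately have "2 * W / R < A * lam" using A \<open>0 \<le> C\<close> by linarith
  then have AlamR: "2 * W < A * lam * R" and Alam_pos: "0 < A * lam"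
    using \<open>0 < R\<close> \<open>0 \<le> 2 * W / R\<close> by (simp add: divide_less_eq, linarith)
  then have "0 \<le> A" using lam_pos by (simp add: zero_less_mult_iff)
  define F where "F u = - w u + A * M u z" for u
  interpret smooth_variational "cball z R" F M lam "2 * Lam * R" a
    unfolding F_def using smooth_variational_gauge_cball[OF gauge cont bounded \<open>0 \<le> A\<close> a] .
  obtain y where "y \<in> cball z R" and "F y \<le> F a"
    and minimal: "\<And>u. u \<in> cball z R \<Longrightarrow> F y + penalty y \<le> F u + penalty u"
    using smooth_variational_principle by blast
  have "F a < F z"
    using contra mult_left_mono[OF upper[of a z] \<open>0 \<le> A\<close>] by (simp add: F_def M_self)
  with \<open>F y \<le> F a\<close> have "y \<noteq> z" by auto
  have "A * lam * norm (y - z) \<le> A * M y z"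
    using mult_left_mono[OF lower[of y z] \<open>0 \<le> A\<close>] by (simp add: mult.assoc)
  also have "\<dots> < w y - w z" using \<open>F y \<le> F a\<close> \<open>F a < F z\<close> by (simp add: F_def M_self)
  also have "\<dots> \<le> 2 * W" using bounded[of y] bounded[of z] \<open>y \<in> cball z R\<close> \<open>0 < R\<close> by simp
  finally have "A * lam * norm (y - z) < A * lam * R" using AlamR by linarith
  then have "y \<in> ball z R"
    by (simp only: mult_less_cancel_left_pos[OF Alam_pos]) (simp add: dist_norm norm_minus_commute)
  then have "y \<in> interior (cball z R)" using interior_maximal[OF ball_subset_cball open_ball] by blast
  obtain \<eta> where "\<eta> \<in> superjet w y" and "A * lam - 4 * Lam * (2 * Lam * R) \<le> norm \<eta>"
  proof (rule superjet_at_perturbed_minimum[OF \<open>y \<noteq> z\<close> \<open>0 \<le> A\<close> \<open>y \<in> interior (cball z R)\<close>])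
    show "M (center k) y \<le> 2 * Lam * R" for k by (rule m_bounded[OF center_in_K \<open>y \<in> cball z R\<close>])
    show "- w y + A * M y z + (\<Sum>k. (1/2)^k * (M (center k) y)\<^sup>2)
        \<le> - w u + A * M u z + (\<Sum>k. (1/2)^k * (M (center k) u)\<^sup>2)"
      if "u \<in> cball z R" for u using minimal[OF that] by (simp add: F_def penalty_def)
  qed
  moreover have "norm \<eta> \<le> C" using superjet \<open>y \<in> ball z R\<close> \<open>\<eta> \<in> superjet w y\<close> .
  moreover have "4 * Lam * (2 * Lam * R) = 8 * Lam\<^sup>2 * R" by (simp add: power2_eq_square)
  ultimately show False using A \<open>0 \<le> 2 * W / R\<close> by linarith
qed

lemma locally_lipschitz_on_of_superjet_bound:
  fixes M :: "'a::banach \<Rightarrow> 'a \<Rightarrow> real" and w :: "'a \<Rightarrow> real"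
  assumes gauge: "gauge M lam Lam" and "open U"
    and w_cont: "continuous_on U w" and w_bounded: "locally_bounded_on U w"
    and superjet: "\<And>y \<eta>. y \<in> U \<Longrightarrow> \<eta> \<in> superjet w y \<Longrightarrow> norm \<eta> \<le> C" and "0 \<le> C"
  shows "locally_lipschitz_on U w"
  unfolding locally_lipschitz_on_def
proof
  fix u0 assume "u0 \<in> U"
  obtain r1 where "0 < r1" "ball u0 r1 \<subseteq> U" using \<open>open U\<close> \<open>u0 \<in> U\<close> open_contains_ball by blast
  obtain r2 W where "0 < r2" and W: "\<forall>v\<in>U \<inter> ball u0 r2. \<bar>w v\<bar> \<le> W"
    using w_bounded \<open>u0 \<in> U\<close> unfolding locally_bounded_on_def by blast
  define r where "r = min r1 r2 / 3"
  define A where "A = (C + 8 * Lam\<^sup>2 * (2 * r) + 2 * W / (2 * r) + 1) / lam"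
  have "0 < r" using \<open>0 < r1\<close> \<open>0 < r2\<close> by (simp add: r_def)
  have estimate: "w a - w z \<le> A * Lam * norm (a - z)" if "a \<in> ball u0 r" "z \<in> ball u0 r" for a z
  proof (rule one_sided_lipschitz_of_superjet_bound[OF gauge])
    have "cball z (2 * r) \<subseteq> ball u0 (min r1 r2)"
    proof
      fix v assume "v \<in> cball z (2 * r)"
      then show "v \<in> ball u0 (min r1 r2)"
        using that(2) dist_triangle[of u0 v z] by (simp add: r_def min_def)
    qed
    then have cball: "cball z (2 * r) \<subseteq> U \<inter> ball u0 r2"
      using \<open>ball u0 r1 \<subseteq> U\<close> by (auto simp: ball_min_Int)
    show "continuous_on (cball z (2 * r)) w" using continuous_on_subset[OF w_cont] cball by blast
    show "\<bar>w v\<bar> \<le> W" if "v \<in> cball z (2 * r)" for v using W cball that by blast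
    show "norm \<eta> \<le> C" if "y \<in> ball z (2 * r)" "\<eta> \<in> superjet w y" for y \<eta>
      using superjet[OF _ that(2)] cball ball_subset_cball that(1) by blast
    show "a \<in> cball z (2 * r)" using that dist_triangle[of z a u0] by (simp add: dist_commute)
    show "C + 8 * Lam\<^sup>2 * (2 * r) + 2 * W / (2 * r) < A * lam"
      using gauge.lam_pos[OF gauge] by (simp add: A_def)
  qed (use \<open>0 < r\<close> \<open>0 \<le> C\<close> in auto)
  show "\<exists>r>0. \<exists>L. \<forall>y\<in>U \<inter> ball u0 r. \<forall>z\<in>U \<inter> ball u0 r. \<bar>w y - w z\<bar> \<le> L * dist y z"
    using estimate \<open>0 < r\<close> by (fastforce simp: abs_le_iff dist_norm norm_minus_commute)
qed

theorem mainTheorem1: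
  fixes f :: "'x::banach \<Rightarrow> 'y::banach \<Rightarrow> real"
    and X :: "'x set" and U :: "'y set"
    and Phi :: "'y \<Rightarrow> 'x set"
    and w :: "'y \<Rightarrow> real"
    and M :: "'y \<Rightarrow> 'y \<Rightarrow> real"
    and lam Lam C0 :: real
  assumes X_ne: "X \<noteq> {}" and U_ne: "U \<noteq> {}"
    and U_open: "open U"
    and f_cont: "continuous_on (X \<times> U) (\<lambda>(x, u). f x u)"
    and Phi_map: "\<forall>u\<in>U. Phi u \<subseteq> X"
    and w_cont: "continuous_on U w"
    and w_lbd: "locally_bounded_on U w"
    and H1: "reflexive_space TYPE('y)"
    and H2_nonneg: "\<forall>y1 y2. 0 \<le> M y1 y2"
    and H2_diff1: "\<forall>y1 y2. y1 \<noteq> y2 \<longrightarrow> (\<lambda>y. M y y2) differentiable (at y1)"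
    and H2_diff2: "\<forall>y1 y2. y2 \<noteq> y1 \<longrightarrow> (\<lambda>y. M y1 y) differentiable (at y2)"
    and H2_lam: "0 < lam" "lam \<le> 1"
    and H2_Lam: "1 \<le> Lam"
    and H2_bounds: "\<forall>y1 y2. lam * norm (y1 - y2) \<le> M y1 y2 \<and> M y1 y2 \<le> Lam * norm (y1 - y2)"
    and H2_grad1: "\<forall>y1 y2 D. ((\<lambda>y. M y y2) has_derivative D) (at y1) \<longrightarrow> lam \<le> onorm D"
    and H2_grad2: "\<forall>y1 y2 D. ((\<lambda>y. M y1 y) has_derivative D) (at y2) \<longrightarrow> onorm D \<le> Lam"
    and i_exists: "\<forall>x\<in>X. \<forall>u\<in>U. \<forall>d. norm d = 1 \<longrightarrow> dir_deriv_exists f x u d"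
    and i_C0: "0 < C0"
    and i_bound: "\<forall>u\<in>U. \<forall>d. norm d = 1 \<longrightarrow>
                    (INF x\<in>optset f Phi u. ereal (dir_deriv f x u d)) > ereal (- C0)"
    and ii: "\<forall>d. norm d = 1 \<longrightarrow> (\<forall>u\<in>U. visc_subsol_at f Phi d w u)"
  shows "locally_lipschitz_on U w"
proof (rule locally_lipschitz_on_of_superjet_bound)
  show "gauge M lam Lam"
    by unfold_locales (use H2_lam H2_Lam H2_bounds H2_diff1 H2_diff2 H2_grad1 H2_grad2 in auto)
  show "norm \<eta> \<le> C0" if "y \<in> U" and "\<eta> \<in> superjet w y" for y \<eta>
    using superjet_norm_le[OF _ _ less_imp_le[OF i_C0] that(2)] ii i_bound that(1) by blast
qed (use U_open w_cont w_lbd i_C0 in auto)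

end
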